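(* A total ${\cal X}_5$-interpretation $M=\langle T,T\rangle$ is an equilibrium model of a theory $\Gamma$ if and only if $M(\varphi)=2$ for all $\varphi\in\Gamma$ and there is no ${\cal X}_5$-interpretation $M'$ with $M'\le M$, $M'\ne M$, such that $M'(\varphi)=2$ for all $\varphi\in\Gamma$.
   Context: Fix a set $\mathit{At}$ of atoms. An explicit literal is $p$ or $\sim p$ for $p\in\mathit{At}$; a set of explicit literals is consistent if it never contains both $p$ and $\sim p$. Formulas: $\varphi ::= p\mid\bot\mid\varphi\wedge\varphi\mid\varphi\vee\varphi\mid\varphi\to\varphi\mid\sim\varphi$; abbreviations $\neg\varphi:=\varphi\to\bot$, $\top:=\neg\bot$; a theory is a set of formulas. An ${\cal X}_5$-interpretation is a pair $\langle H,T\rangle$ of consistent sets of explicit literals with $H\subseteq T$; total if $H=T$. Satisfaction $\models$ and falsification $=\!\!|\;$: $\langle H,T\rangle\not\models\bot$, $\langle H,T\rangle=\!\!|\;\bot$; $\models p$ iff $p\in H$, $=\!\!|\;p$ iff $\sim p\in H$; $\models\varphi\wedge\psi$ iff both satisfied, $=\!\!|\;\varphi\wedge\psi$ iff at least one falsified; $\models\varphi\vee\psi$ iff at least one satisfied, $=\!\!|\;\varphi\vee\psi$ iff both falsified; $\models\sim\varphi$ iff $=\!\!|\;\varphi$, $=\!\!|\;\sim\varphi$ iff $\models\varphi$; $\langle H,T\rangle\models\varphi\to\psi$ iff (i) $\langle H,T\rangle\not\models\varphi$ or $\langle H,T\rangle\models\psi$ and (ii) $\langle T,T\rangle\not\models\varphi$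 or $\langle T,T\rangle\models\psi$; $\langle H,T\rangle=\!\!|\;\varphi\to\psi$ iff $\langle T,T\rangle\models\varphi$ and $\langle H,T\rangle=\!\!|\;\psi$. $\langle T,T\rangle$ is an equilibrium model of $\Gamma$ if it satisfies every formula of $\Gamma$ and there is no $\langle H,T\rangle$ with $H\subsetneq T$ satisfying every formula of $\Gamma$. Five-valued valuation of $M=\langle H,T\rangle$: $M(p)=2$ if $p\in H$; $-2$ if $\sim p\in H$; $1$ if $p\in T\setminus H$; $-1$ if $\sim p\in T\setminus H$; $0$ otherwise; $M(\bot)=-2$, $M(\top)=2$, $M(\varphi\wedge\psi)=\min$, $M(\varphi\vee\psi)=\max$, $M(\varphi\to\psi)=2$ if $M(\varphi)\le\max(M(\psi),0)$ and $M(\psi)$ otherwise, $M(\sim\varphi)=-M(\varphi)$. For ${\cal X}_5$-interpretations $M=\langle H,T\rangle$, $M'=\langle H',T'\rangle$, $M\le M'$ means $T=T'$ and $H\subseteq H'$. *)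

theory Defs
  imports Main
begin

datatype 'a form =
    Atom 'a
  | Bot
  | And "'a form" "'a form"
  | Or "'a form" "'a form"
  | Imp "'a form" "'a form"
  | SNeg "'a form"

definition Neg :: "'a form \<Rightarrow> 'a form" where
  "Neg \<phi> = Imp \<phi> Bot"

definition Top :: "'a form" where
  "Top = Neg Bot"

text \<open>Explicit literals: p or \<sim>p.\<close>
datatype 'a lit = PosL 'a | NegL 'a

definition consistent :: "'a lit set \<Rightarrow> bool" where
  "consistent S \<longleftrightarrow> (\<forall>p. \<not> (PosL p \<in> S \<and> NegL p \<in> S))"

definition X5_interp :: "'a lit set \<Rightarrow> 'a lit set \<Rightarrow> bool" where
  "X5_interp H T \<longleftrightarrow> consistent H \<and> consistent T \<and> H \<subseteq> T"

fun sat :: "'a lit set \<Rightarrow> 'a lit set \<Rightarrow> bool \<Rightarrow> 'a form \<Rightarrow> bool" where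
  "sat H T True (Atom p) = (PosL p \<in> H)"
| "sat H T False (Atom p) = (NegL p \<in> H)"
| "sat H T True Bot = False"
| "sat H T False Bot = True"
| "sat H T True (And \<phi> \<psi>) = (sat H T True \<phi> \<and> sat H T True \<psi>)"
| "sat H T False (And \<phi> \<psi>) = (sat H T False \<phi> \<or> sat H T False \<psi>)"
| "sat H T True (Or \<phi> \<psi>) = (sat H T True \<phi> \<or> sat H T True \<psi>)"
| "sat H T False (Or \<phi> \<psi>) = (sat H T False \<phi> \<and> sat H T False \<psi>)"
| "sat H T True (SNeg \<phi>) = sat H T False \<phi>"
| "sat H T False (SNeg \<phi>) = sat H T True \<phi>"
| "sat H T True (Imp \<phi> \<psi>) =
     ((\<not> sat H T True \<phi> \<or> sat H T True \<psi>) \<and> (\<not> sat T T True \<phi> \<or> sat T T True \<psi>))"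
| "sat H T False (Imp \<phi> \<psi>) = (sat T T True \<phi> \<and> sat H T False \<psi>)"

abbreviation models :: "'a lit set \<Rightarrow> 'a lit set \<Rightarrow> 'a form \<Rightarrow> bool" where
  "models H T \<phi> \<equiv> sat H T True \<phi>"

abbreviation falsifies :: "'a lit set \<Rightarrow> 'a lit set \<Rightarrow> 'a form \<Rightarrow> bool" where
  "falsifies H T \<phi> \<equiv> sat H T False \<phi>"

definition equilibrium_model :: "'a lit set \<Rightarrow> 'a form set \<Rightarrow> bool" where
  "equilibrium_model T \<Gamma> \<longleftrightarrow>
     (\<forall>\<phi>\<in>\<Gamma>. models T T \<phi>) \<and>
     \<not> (\<exists>H. X5_interp H T \<and> H \<subset> T \<and> (\<forall>\<phi>\<in>\<Gamma>. models H T \<phi>))"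

definition val_atom :: "'a lit set \<Rightarrow> 'a lit set \<Rightarrow> 'a \<Rightarrow> int" where
  "val_atom H T p =
     (if PosL p \<in> H then 2
      else if NegL p \<in> H then -2
      else if PosL p \<in> T then 1
      else if NegL p \<in> T then -1
      else 0)"

fun val :: "'a lit set \<Rightarrow> 'a lit set \<Rightarrow> 'a form \<Rightarrow> int" where
  "val H T (Atom p) = val_atom H T p"
| "val H T Bot = -2"
| "val H T (And \<phi> \<psi>) = min (val H T \<phi>) (val H T \<psi>)"
| "val H T (Or \<phi> \<psi>) = max (val H T \<phi>) (val H T \<psi>)"
| "val H T (Imp \<phi> \<psi>) =
     (if val H T \<phi> \<le> max (val H T \<psi>) 0 then 2 else val H T \<psi>)"
| "val H T (SNeg \<phi>) = - val H T \<phi>"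

definition x5_le :: "'a lit set \<times> 'a lit set \<Rightarrow> 'a lit set \<times> 'a lit set \<Rightarrow> bool" where
  "x5_le M M' \<longleftrightarrow> snd M = snd M' \<and> fst M \<subseteq> fst M'"

end

theory Submission
  imports Defs
begin

text \<open>Satisfaction at \<open>\<langle>H,T\<rangle>\<close> is having value 2 and falsification is having value -2; this
  is proved by a simultaneous induction on the formula.  The implication case needs the values
  at the total interpretation \<open>\<langle>T,T\<rangle>\<close>, which arise from those at \<open>\<langle>H,T\<rangle>\<close> by pushing
  the undecided values \<open>\<plusminus>1\<close> to \<open>\<plusminus>2\<close>.  With this, the minimality condition defining
  equilibrium models is literally the five-valued one, since the interpretations strictly below
  \<open>\<langle>T,T\<rangle>\<close> are exactly the \<open>\<langle>H,T\<rangle>\<close> with \<open>H \<subset> T\<close>.\<close>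

definition totalize :: "int \<Rightarrow> int" where
  "totalize v = (if v = 1 then 2 else if v = -1 then -2 else v)"

lemma val_bounds: "-2 \<le> val H T \<phi> \<and> val H T \<phi> \<le> 2"
  by (induction \<phi>) (auto simp: val_atom_def)

lemma val_total_eq_totalize:
  assumes "X5_interp H T"
  shows "val T T \<phi> = totalize (val H T \<phi>)"
proof (induction \<phi>)
  case (Atom p)
  then show ?case using assms
    by (auto simp: val_atom_def totalize_def X5_interp_def consistent_def)
next
  case (Imp \<phi> \<psi>)
  then show ?case using val_bounds[of H T \<phi>] val_bounds[of H T \<psi>]
    by (auto simp: totalize_def max_def)
qed (auto simp: totalize_def min_def max_def)

lemma sat_iff_val:
  assumes "X5_interp H T"
  shows "(models H T \<phi> \<longleftrightarrow> val H T \<phi> = 2) \<and> (falsifies H T \<phi> \<longleftrightarrow> val H T \<phi> = -2)"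
  using assms
proof (induction \<phi> arbitrary: H)
  case (Atom p)
  then show ?case
    by (auto simp: val_atom_def X5_interp_def consistent_def)
next
  case (And \<phi> \<psi>)
  then show ?case using val_bounds[of H T \<phi>] val_bounds[of H T \<psi>]
    by (auto simp: min_def)
next
  case (Or \<phi> \<psi>)
  then show ?case using val_bounds[of H T \<phi>] val_bounds[of H T \<psi>]
    by (auto simp: max_def)
next
  case (Imp \<phi> \<psi>)
  have total: "X5_interp T T"
    using Imp.prems by (simp add: X5_interp_def)
  have "models T T \<phi> \<longleftrightarrow> totalize (val H T \<phi>) = 2"
    "models T T \<psi> \<longleftrightarrow> totalize (val H T \<psi>) = 2"
    using Imp.IH[OF total] val_total_eq_totalize[OF Imp.prems] by simp_all
  then show ?case using Imp.IH[OF Imp.prems] val_bounds[of H T \<phi>] val_bounds[of H T \<psi>]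
    by (auto simp: totalize_def max_def)
qed auto

corollary models_iff_val_eq_2:
  "X5_interp H T \<Longrightarrow> models H T \<phi> \<longleftrightarrow> val H T \<phi> = 2"
  using sat_iff_val by blast

lemma x5_le_total_iff: "x5_le (H', T') (T, T) \<longleftrightarrow> T' = T \<and> H' \<subseteq> T"
  by (auto simp: x5_le_def)

theorem theorem6:
  fixes T :: "'a lit set" and \<Gamma> :: "'a form set"
  assumes "X5_interp T T"
  shows "equilibrium_model T \<Gamma> \<longleftrightarrow>
           ((\<forall>\<phi>\<in>\<Gamma>. val T T \<phi> = 2) \<and>
            \<not> (\<exists>H' T'. X5_interp H' T' \<and> x5_le (H', T') (T, T) \<and> (H', T') \<noteq> (T, T) \<and>
                       (\<forall>\<phi>\<in>\<Gamma>. val H' T' \<phi> = 2)))"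
proof -
  have "(\<exists>H' T'. X5_interp H' T' \<and> x5_le (H', T') (T, T) \<and> (H', T') \<noteq> (T, T) \<and>
                 (\<forall>\<phi>\<in>\<Gamma>. val H' T' \<phi> = 2)) \<longleftrightarrow>
        (\<exists>H. X5_interp H T \<and> H \<subset> T \<and> (\<forall>\<phi>\<in>\<Gamma>. val H T \<phi> = 2))"
    by (auto simp: x5_le_total_iff)
  also have "\<dots> \<longleftrightarrow> (\<exists>H. X5_interp H T \<and> H \<subset> T \<and> (\<forall>\<phi>\<in>\<Gamma>. models H T \<phi>))"
    using models_iff_val_eq_2 by blast
  finally show ?thesis
    using models_iff_val_eq_2[OF assms] by (simp add: equilibrium_model_def)
qed

end
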